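(* Fix $j\ge0$. Let $f_j(z)$, $g_j(z)$, $h_j(z)$ be the generating functions, in which $z^n$ marks paths of length $n$, of the following partial Dyck paths ending at height $j$: <ul> <li>$f_j$: all descents have odd length, and the path either ends with an up-step or is the empty path (the empty path only when $j=0$);</li> <li>$g_j$: the path ends with a down-step, its last descent has odd length, and all earlier descents have odd length;</li> <li>$h_j$: the path ends with a down-step, its last descent has even length, and all earlier descents have odd length.</li> </ul> Then $f_0=1$, $f_j=v_1^{-j}$ for $j\ge1$, and for all $j\ge0$ $$g_j=\frac{z(1+h_0)}{v_1^{\,j+1}},\qquad h_j=\frac{z\,g_0}{v_1^{\,j+1}},$$ where $$g_0=\frac{z v_1}{v_1^2-z^2},\qquad h_0=\frac{z^2}{v_1^2-z^2}.$$ Equivalently, in terms of the bivariate series, one has $\sum_{j\ge0}f_ju^j=1-\frac{u}{u-v_1}$, $\sum_{j\ge0}g_ju^j=\frac{-z(1+h_0)}{u-v_1}$ and $\sum_{j\ge0}h_ju^j=\frac{-zg_0}{u-v_1}$.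
   Context: A partial Dyck path (prefix of a Dyck path) is a finite sequence of up-steps $(1,1)$ and down-steps $(1,-1)$ starting at height $0$ and never going below height $0$; its length is its number of steps. A descent is a maximal run of consecutive down-steps; its length is the number of down-steps in it. Let $v_1=v_1(z)$ denote the unique root $u$ of the cubic $$z u^3+(z^2-1)u^2-z^3u+z^2=0$$ which is a Laurent series in $z$ with $z\,v_1(z)\to1$ as $z\to0$. Its expansion begins $v_1=\frac1z-z-z^5-2z^7-\cdots$. *)

theory Defs
  imports "HOL-Computational_Algebra.Formal_Laurent_Series"
begin

definition step_val :: "bool \<Rightarrow> int" where
  "step_val b = (if b then 1 else -1)"

definition height :: "bool list \<Rightarrow> int" where
  "height xs = (\<Sum>b\<leftarrow>xs. step_val b)"

definition partial_dyck :: "bool list \<Rightarrow> bool" where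
  "partial_dyck xs \<longleftrightarrow> (\<forall>k\<le>length xs. height (take k xs) \<ge> 0)"

(* lengths of the maximal runs of down-steps, in order of occurrence;
   c is the length of the run currently being read *)
fun desc_aux :: "nat \<Rightarrow> bool list \<Rightarrow> nat list" where
  "desc_aux c [] = (if c > 0 then [c] else [])"
| "desc_aux c (True # xs) = (if c > 0 then c # desc_aux 0 xs else desc_aux 0 xs)"
| "desc_aux c (False # xs) = desc_aux (Suc c) xs"

definition descents :: "bool list \<Rightarrow> nat list" where
  "descents xs = desc_aux 0 xs"

definition F_paths :: "nat \<Rightarrow> bool list set" where
  "F_paths j = {xs. partial_dyck xs \<and> height xs = int j
      \<and> (\<forall>d\<in>set (descents xs). odd d) \<and> (xs = [] \<or> last xs = True)}"

definition G_paths :: "nat \<Rightarrow> bool list set" where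
  "G_paths j = {xs. partial_dyck xs \<and> height xs = int j \<and> xs \<noteq> [] \<and> last xs = False
      \<and> odd (last (descents xs)) \<and> (\<forall>d\<in>set (butlast (descents xs)). odd d)}"

definition H_paths :: "nat \<Rightarrow> bool list set" where
  "H_paths j = {xs. partial_dyck xs \<and> height xs = int j \<and> xs \<noteq> [] \<and> last xs = False
      \<and> even (last (descents xs)) \<and> (\<forall>d\<in>set (butlast (descents xs)). odd d)}"

definition gf :: "bool list set \<Rightarrow> real fls" where
  "gf S = fps_to_fls (Abs_fps (\<lambda>n. of_nat (card {xs\<in>S. length xs = n})))"

(* v_1: the root of z u^3 + (z^2-1) u^2 - z^3 u + z^2 = 0 that is a Laurent series
   with z v_1 -> 1 as z -> 0, i.e. subdegree -1 and leading coefficient 1 *)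
definition v1 :: "real fls" where
  "v1 = (THE u. fls_X * u^3 + (fls_X^2 - 1) * u^2 - fls_X^3 * u + fls_X^2 = 0
            \<and> u \<noteq> 0 \<and> fls_subdegree u = -1 \<and> fls_nth u (-1) = 1)"

end

(*
  Cutting a path that ends at height j + 1 at its last up-step from height 0 writes it uniquely
  as A @ up # B, where A returns to height 0 with all descents odd (an excursion) and B is a
  path of the same kind one level lower.  Hence every level contributes a factor W = z E,
  E the excursion series: f_j = W^j, g_j = W^j g_0, h_j = W^j h_0.  Removing a final
  down-step changes the parity of the last descent, which gives g_0 = z (f_1 + h_1),
  h_0 = z g_1, and E = 1 + g_0.  Eliminating g_0 and h_0 shows that W = z + O(z^2) is a root
  of the reciprocal of the cubic defining v_1, which has only one power series root; so
  v_1 = 1/W and all formulas follow by algebra.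
*)

theory Submission
  imports Defs
begin

section \<open>Heights, descents and the last-return decomposition\<close>

lemma step_val_simps [simp]: "step_val True = 1" "step_val False = -1"
  by (simp_all add: step_val_def)

lemma height_simps [simp]:
  "height [] = 0"
  "height (b # xs) = step_val b + height xs"
  "height (xs @ ys) = height xs + height ys"
  by (simp_all add: height_def)

lemma desc_aux_append_up: "desc_aux c (xs @ True # ys) = desc_aux c xs @ desc_aux 0 ys"
  by (induction c xs rule: desc_aux.induct) auto

lemma descents_append_up: "descents (xs @ True # ys) = descents xs @ descents ys"
  by (simp add: descents_def desc_aux_append_up)

lemma desc_aux_snoc_down_nonempty: "desc_aux c (xs @ [False]) \<noteq> []"
  by (induction c xs rule: desc_aux.induct) auto

lemma desc_aux_nonempty: "xs \<noteq> [] \<Longrightarrow> last xs = False \<Longrightarrow> desc_aux c xs \<noteq> []"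
  by (metis append_butlast_last_id desc_aux_snoc_down_nonempty)

lemma desc_aux_snoc_down:
  "desc_aux c (xs @ [False]) =
    (if (xs \<noteq> [] \<and> last xs = False) \<or> (xs = [] \<and> c > 0)
     then butlast (desc_aux c xs) @ [Suc (last (desc_aux c xs))] else desc_aux c xs @ [1])"
  by (induction c xs rule: desc_aux.induct) (auto dest: desc_aux_nonempty)

lemma descents_nonempty: "xs \<noteq> [] \<Longrightarrow> last xs = False \<Longrightarrow> descents xs \<noteq> []"
  by (simp add: descents_def desc_aux_nonempty)

lemma descents_snoc_down:
  "descents (xs @ [False]) =
    (if xs \<noteq> [] \<and> last xs = False
     then butlast (descents xs) @ [Suc (last (descents xs))] else descents xs @ [1])"
  by (simp add: descents_def desc_aux_snoc_down)

lemma ball_set_butlast_last: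
  "ds \<noteq> [] \<Longrightarrow> (\<forall>d\<in>set ds. P d) \<longleftrightarrow> P (last ds) \<and> (\<forall>d\<in>set (butlast ds). P d)"
  by (induction ds rule: rev_induct) auto

lemma partial_dyck_Nil [simp]: "partial_dyck []"
  by (simp add: partial_dyck_def)

lemma partial_dyck_height_nonneg: "partial_dyck xs \<Longrightarrow> height xs \<ge> 0"
  unfolding partial_dyck_def by (metis order_refl take_all)

lemma partial_dyck_snoc:
  "partial_dyck (xs @ [b]) \<longleftrightarrow> partial_dyck xs \<and> height (xs @ [b]) \<ge> 0"
  unfolding partial_dyck_def
  by (auto simp: le_Suc_eq)

lemma partial_dyck_append_up:
  assumes "partial_dyck xs" "height xs = 0" "partial_dyck ys"
  shows "partial_dyck (xs @ True # ys)"
  unfolding partial_dyck_def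
proof (intro allI impI)
  fix k assume k: "k \<le> length (xs @ True # ys)"
  show "0 \<le> height (take k (xs @ True # ys))"
  proof (cases "k \<le> length xs")
    case True
    then show ?thesis using assms(1) unfolding partial_dyck_def by simp
  next
    case False
    then obtain m where m: "k = length xs + Suc m"
      by (metis add_Suc_right le_add1 less_imp_Suc_add not_le)
    have "height (take m ys) \<ge> 0"
      using assms(3) partial_dyck_height_nonneg unfolding partial_dyck_def by (cases "m \<le> length ys") auto
    then show ?thesis using assms(2) m by simp
  qed
qed

lemma partial_dyck_ends_up_height:
  assumes "partial_dyck xs" "xs \<noteq> []" "last xs = True"
  shows "height xs \<ge> 1"
proof -
  have xs: "xs = butlast xs @ [True]" using assms(2,3) by (metis append_butlast_last_id)
  then have "partial_dyck (butlast xs)" using assms(1) partial_dyck_snoc by metis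
  then have "height (butlast xs) \<ge> 0" by (rule partial_dyck_height_nonneg)
  then show ?thesis by (subst xs) simp
qed

text \<open>The cut is at the up-step leaving height 0 for the last time.\<close>

lemma last_return_decomposition:
  assumes "partial_dyck xs" "height xs \<ge> 1"
  obtains A B where "xs = A @ True # B" "partial_dyck A" "height A = 0" "partial_dyck B"
  using assms
proof (induction xs arbitrary: thesis rule: rev_induct)
  case Nil
  then show ?case by simp
next
  case (snoc b ys)
  have ys: "partial_dyck ys" "height ys \<ge> 0"
    using snoc.prems(2) partial_dyck_snoc partial_dyck_height_nonneg by blast+
  show ?case
  proof (cases "height ys = 0 \<and> b")
    case True
    then show ?thesis using snoc.prems(1)[of ys "[]"] ys by simp
  next
    case False
    then have "height ys \<ge> 1" using ys snoc.prems(3) by (cases b) auto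
    then obtain A B where AB: "ys = A @ True # B" "partial_dyck A" "height A = 0" "partial_dyck B"
      using snoc.IH ys(1) by blast
    have "height (B @ [b]) = height (ys @ [b]) - 1" using AB by simp
    then have "partial_dyck (B @ [b])" using AB(4) snoc.prems(3) partial_dyck_snoc by simp
    then show ?thesis using snoc.prems(1)[of A "B @ [b]"] AB by simp
  qed
qed

lemma last_return_decomposition_unique:
  assumes eq: "A @ True # B = A' @ True # B'"
    and "height A = 0" "height A' = 0" "partial_dyck B" "partial_dyck B'"
  shows "A = A' \<and> B = B'"
proof -
  have not_shorter: "\<not> length X < length X'"
    if e: "X @ True # Y = X' @ True # Y'" and "height X = 0" "height X' = 0" "partial_dyck Y"
    for X Y X' Y'
  proof
    assume "length X < length X'"
    then obtain m where m: "length X' = length X + Suc m" using less_imp_Suc_add by auto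
    have "X' = take (length X') (X @ True # Y)" using e by (metis append_eq_conv_conj)
    then have "height X' = 1 + height (take m Y)" using m \<open>height X = 0\<close> by simp
    moreover have "height (take m Y) \<ge> 0"
      using \<open>partial_dyck Y\<close> partial_dyck_height_nonneg unfolding partial_dyck_def
      by (cases "m \<le> length Y") auto
    ultimately show False using \<open>height X' = 0\<close> by simp
  qed
  have "length A = length A'"
    using not_shorter[OF eq] not_shorter[OF eq[symmetric]] assms by (meson linorder_neqE_nat)
  then show ?thesis using eq by simp
qed

definition excursions :: "bool list set" where
  "excursions = {xs. partial_dyck xs \<and> height xs = 0 \<and> (\<forall>d\<in>set (descents xs). odd d)}"

definition paths_at :: "(bool list \<Rightarrow> bool) \<Rightarrow> nat \<Rightarrow> bool list set" where
  "paths_at P j = {xs. partial_dyck xs \<and> height xs = int j \<and> P xs}"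

definition up_join :: "bool list set \<Rightarrow> bool list set \<Rightarrow> bool list set" where
  "up_join X Y = (\<lambda>(a, b). a @ True # b) ` (X \<times> Y)"

definition ends_with_descent :: "(nat \<Rightarrow> bool) \<Rightarrow> bool list \<Rightarrow> bool" where
  "ends_with_descent Q xs \<longleftrightarrow> xs \<noteq> [] \<and> last xs = False \<and> Q (last (descents xs))
     \<and> (\<forall>d\<in>set (butlast (descents xs)). odd d)"

lemma F_paths_eq: "F_paths = paths_at (\<lambda>xs. (\<forall>d\<in>set (descents xs). odd d) \<and> (xs = [] \<or> last xs = True))"
  by (simp add: fun_eq_iff F_paths_def paths_at_def)

lemma G_paths_eq: "G_paths = paths_at (ends_with_descent odd)"
  by (simp add: fun_eq_iff G_paths_def paths_at_def ends_with_descent_def)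

lemma H_paths_eq: "H_paths = paths_at (ends_with_descent even)"
  by (simp add: fun_eq_iff H_paths_def paths_at_def ends_with_descent_def)

lemma F_paths_0: "F_paths 0 = {[]}"
proof -
  have "xs = []" if "xs \<in> F_paths 0" for xs
    using that partial_dyck_ends_up_height[of xs] unfolding F_paths_def by fastforce
  moreover have "[] \<in> F_paths 0" unfolding F_paths_def descents_def by simp
  ultimately show ?thesis by blast
qed

lemma paths_at_Suc:
  assumes "\<And>A B. P (A @ True # B) \<longleftrightarrow> (\<forall>d\<in>set (descents A). odd d) \<and> P B"
  shows "paths_at P (Suc j) = up_join excursions (paths_at P j)"
proof
  show "paths_at P (Suc j) \<subseteq> up_join excursions (paths_at P j)"
  proof
    fix xs assume xs: "xs \<in> paths_at P (Suc j)"
    then have "partial_dyck xs" "height xs \<ge> 1" unfolding paths_at_def by auto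
    then obtain A B where AB: "xs = A @ True # B" "partial_dyck A" "height A = 0" "partial_dyck B"
      by (rule last_return_decomposition)
    have "(\<forall>d\<in>set (descents A). odd d) \<and> P B" "height B = int j"
      using xs assms AB unfolding paths_at_def by auto
    then have "A \<in> excursions" "B \<in> paths_at P j"
      using AB unfolding paths_at_def excursions_def by auto
    then show "xs \<in> up_join excursions (paths_at P j)" unfolding up_join_def AB(1) by force
  qed
  show "up_join excursions (paths_at P j) \<subseteq> paths_at P (Suc j)"
    using assms partial_dyck_append_up
    unfolding up_join_def paths_at_def excursions_def by auto
qed

lemma ends_with_descent_append_up:
  "ends_with_descent Q (A @ True # B) \<longleftrightarrow> (\<forall>d\<in>set (descents A). odd d) \<and> ends_with_descent Q B"
proof (cases "B \<noteq> [] \<and> last B = False")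
  case True
  then have "descents B \<noteq> []" by (simp add: descents_nonempty)
  then show ?thesis using True
    by (auto simp: ends_with_descent_def descents_append_up butlast_append)
qed (auto simp: ends_with_descent_def)

lemma image_snoc_down_eqI:
  assumes "\<And>s. s \<in> S \<Longrightarrow> s \<noteq> [] \<and> last s = False" "\<And>xs. xs @ [False] \<in> S \<longleftrightarrow> xs \<in> T"
  shows "S = (\<lambda>xs. xs @ [False]) ` T"
  using assms by (auto simp: image_iff) (metis append_butlast_last_id)

lemma ends_with_descent_snoc_down:
  "ends_with_descent Q (xs @ [False]) \<longleftrightarrow>
    (if xs \<noteq> [] \<and> last xs = False then ends_with_descent (\<lambda>d. Q (Suc d)) xs
     else Q 1 \<and> (\<forall>d\<in>set (descents xs). odd d))"
proof (cases "xs \<noteq> [] \<and> last xs = False")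
  case True
  then have "descents xs \<noteq> []" by (simp add: descents_nonempty)
  with True show ?thesis by (simp add: ends_with_descent_def descents_snoc_down)
next
  case False
  then show ?thesis by (auto simp: ends_with_descent_def descents_snoc_down)
qed

lemma snoc_down_in_paths_at:
  "xs @ [False] \<in> paths_at P j \<longleftrightarrow> partial_dyck xs \<and> height xs = int (Suc j) \<and> P (xs @ [False])"
  by (auto simp: paths_at_def partial_dyck_snoc)

lemma G_paths_snoc_down: "G_paths j = (\<lambda>xs. xs @ [False]) ` (F_paths (Suc j) \<union> H_paths (Suc j))"
proof (rule image_snoc_down_eqI)
  fix xs :: "bool list"
  show "xs @ [False] \<in> G_paths j \<longleftrightarrow> xs \<in> F_paths (Suc j) \<union> H_paths (Suc j)"
    unfolding G_paths_eq H_paths_eq F_paths_eq snoc_down_in_paths_at ends_with_descent_snoc_down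
    by (auto simp: paths_at_def ends_with_descent_def)
qed (simp add: G_paths_def)

lemma H_paths_snoc_down: "H_paths j = (\<lambda>xs. xs @ [False]) ` G_paths (Suc j)"
proof (rule image_snoc_down_eqI)
  fix xs :: "bool list"
  show "xs @ [False] \<in> H_paths j \<longleftrightarrow> xs \<in> G_paths (Suc j)"
    unfolding G_paths_eq H_paths_eq snoc_down_in_paths_at ends_with_descent_snoc_down
    by (auto simp: paths_at_def ends_with_descent_def)
qed (simp add: H_paths_def)

lemma excursions_eq: "excursions = insert [] (G_paths 0)"
proof (intro set_eqI)
  fix xs
  show "xs \<in> excursions \<longleftrightarrow> xs \<in> insert [] (G_paths 0)"
  proof (cases "xs = []")
    case True
    then show ?thesis by (simp add: excursions_def descents_def)
  next
    case False
    show ?thesis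
    proof
      assume "xs \<in> excursions"
      then have pd: "partial_dyck xs" "height xs = 0" and odd: "\<forall>d\<in>set (descents xs). odd d"
        by (simp_all add: excursions_def)
      have down: "last xs = False"
        using partial_dyck_ends_up_height[OF pd(1) False] pd(2) by (cases "last xs") simp_all
      have "descents xs \<noteq> []" using False down by (rule descents_nonempty)
      then have "xs \<in> G_paths 0"
        using pd odd False down ball_set_butlast_last[OF \<open>descents xs \<noteq> []\<close>, of odd]
        unfolding G_paths_def by simp
      then show "xs \<in> insert [] (G_paths 0)" by simp
    next
      assume "xs \<in> insert [] (G_paths 0)"
      then have G: "xs \<in> G_paths 0" using False by simp
      then have "descents xs \<noteq> []" unfolding G_paths_def by (simp add: descents_nonempty)
      then show "xs \<in> excursions"
        using G ball_set_butlast_last[OF \<open>descents xs \<noteq> []\<close>, of odd]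
        unfolding excursions_def G_paths_def by simp
    qed
  qed
qed

section \<open>Generating functions\<close>

definition length_counts :: "bool list set \<Rightarrow> real fps" where
  "length_counts S = Abs_fps (\<lambda>n. of_nat (card {xs\<in>S. length xs = n}))"

lemma gf_eq_length_counts: "gf S = fps_to_fls (length_counts S)"
  unfolding gf_def length_counts_def ..

lemma finite_length_eq: "finite {xs\<in>(S::bool list set). length xs = n}"
  by (rule finite_subset[OF _ finite_lists_length_eq[of UNIV n]]) auto

lemma gf_Un_disjoint: "S \<inter> T = {} \<Longrightarrow> gf (S \<union> T) = gf S + gf T"
proof -
  assume "S \<inter> T = {}"
  then have "card {xs \<in> S \<union> T. length xs = n} = card {xs \<in> S. length xs = n} + card {xs \<in> T. length xs = n}"
    for n by (subst card_Un_disjoint[symmetric]) (auto intro: arg_cong[where f=card] simp: finite_length_eq)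
  then have "length_counts (S \<union> T) = length_counts S + length_counts T"
    by (simp add: fps_ext length_counts_def)
  then show ?thesis by (simp add: gf_eq_length_counts)
qed

lemma gf_Nil: "gf {[]} = 1"
proof -
  have "length_counts {[]} = 1"
    by (rule fps_ext) (simp add: length_counts_def)
  then show ?thesis by (simp add: gf_eq_length_counts)
qed

lemma gf_image_length_Suc:
  assumes "inj_on f S" "\<And>xs. length (f xs) = Suc (length xs)"
  shows "gf (f ` S) = fls_X * gf S"
proof -
  have "card {ys \<in> f ` S. length ys = Suc n} = card {xs \<in> S. length xs = n}" for n
  proof -
    have "{ys \<in> f ` S. length ys = Suc n} = f ` {xs \<in> S. length xs = n}" using assms(2) by auto
    then show ?thesis using assms(1) by (simp add: card_image inj_on_subset)
  qed
  moreover have "{ys \<in> f ` S. length ys = 0} = {}"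
  proof (intro equals0I)
    fix ys assume "ys \<in> {ys \<in> f ` S. length ys = 0}"
    then obtain xs where "ys = f xs" "length ys = 0" by blast
    then show False using assms(2)[of xs] by simp
  qed
  ultimately have "length_counts (f ` S) $ n = (fps_X * length_counts S) $ n" for n
    by (cases n) (simp_all add: length_counts_def)
  then have "length_counts (f ` S) = fps_X * length_counts S" by (rule fps_ext)
  then show ?thesis by (simp add: gf_eq_length_counts fls_times_fps_to_fls)
qed

lemma gf_image_snoc: "gf ((\<lambda>xs. xs @ [b]) ` S) = fls_X * gf S"
  by (rule gf_image_length_Suc) (auto simp: inj_on_def)

lemma inj_on_up_join:
  assumes "\<And>a. a \<in> X \<Longrightarrow> height a = 0" "\<And>b. b \<in> Y \<Longrightarrow> partial_dyck b"
  shows "inj_on (\<lambda>(a, b). a @ True # b) (X \<times> Y)"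
proof (rule inj_onI)
  fix p q assume "p \<in> X \<times> Y" "q \<in> X \<times> Y" and eq: "(\<lambda>(a, b). a @ True # b) p = (\<lambda>(a, b). a @ True # b) q"
  then obtain a b a' b' where "p = (a, b)" "q = (a', b')" "a \<in> X" "b \<in> Y" "a' \<in> X" "b' \<in> Y"
    by auto
  with eq show "p = q" using last_return_decomposition_unique[of a b a' b'] assms by simp
qed

lemma card_up_join_length:
  assumes "\<And>a. a \<in> X \<Longrightarrow> height a = 0" "\<And>b. b \<in> Y \<Longrightarrow> partial_dyck b"
  shows "card {xs \<in> up_join X Y. length xs = Suc m}
           = (\<Sum>i\<le>m. card {a\<in>X. length a = i} * card {b\<in>Y. length b = m - i})"
proof -
  let ?P = "\<lambda>i. {a\<in>X. length a = i} \<times> {b\<in>Y. length b = m - i}"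
  have "{xs \<in> up_join X Y. length xs = Suc m} = (\<lambda>(a, b). a @ True # b) ` (\<Union>i\<le>m. ?P i)"
  proof (intro equalityI subsetI)
    fix xs assume "xs \<in> {xs \<in> up_join X Y. length xs = Suc m}"
    then obtain a b where "xs = a @ True # b" "a \<in> X" "b \<in> Y" "length a + length b = m"
      unfolding up_join_def by auto
    then show "xs \<in> (\<lambda>(a, b). a @ True # b) ` (\<Union>i\<le>m. ?P i)"
      by (intro image_eqI[of _ _ "(a, b)"]) auto
  qed (auto simp: up_join_def)
  moreover have "inj_on (\<lambda>(a, b). a @ True # b) (\<Union>i\<le>m. ?P i)"
    by (rule inj_on_subset[OF inj_on_up_join[OF assms]]) auto
  ultimately have "card {xs \<in> up_join X Y. length xs = Suc m} = card (\<Union>i\<le>m. ?P i)"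
    by (simp add: card_image)
  also have "\<dots> = (\<Sum>i\<le>m. card (?P i))"
    by (rule card_UN_disjoint) (auto simp: finite_length_eq)
  finally show ?thesis by (simp add: card_cartesian_product)
qed

lemma gf_up_join:
  assumes "\<And>a. a \<in> X \<Longrightarrow> height a = 0" "\<And>b. b \<in> Y \<Longrightarrow> partial_dyck b"
  shows "gf (up_join X Y) = fls_X * gf X * gf Y"
proof -
  have "length_counts (up_join X Y) $ n = (fps_X * (length_counts X * length_counts Y)) $ n" for n
  proof (cases n)
    case 0
    moreover have "{xs \<in> up_join X Y. length xs = 0} = {}" unfolding up_join_def by auto
    ultimately show ?thesis by (simp add: length_counts_def)
  next
    case (Suc m)
    then have "(fps_X * (length_counts X * length_counts Y)) $ n = (length_counts X * length_counts Y) $ m"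
      by simp
    with Suc show ?thesis
      by (simp add: length_counts_def fps_mult_nth atLeast0AtMost card_up_join_length[OF assms])
  qed
  then have "length_counts (up_join X Y) = fps_X * (length_counts X * length_counts Y)"
    by (rule fps_ext)
  then show ?thesis by (simp add: gf_eq_length_counts fls_times_fps_to_fls mult.assoc)
qed

lemma gf_paths_at_power:
  assumes "\<And>A B. P (A @ True # B) \<longleftrightarrow> (\<forall>d\<in>set (descents A). odd d) \<and> P B"
  shows "gf (paths_at P j) = (fls_X * gf excursions) ^ j * gf (paths_at P 0)"
proof (induction j)
  case (Suc j)
  have "gf (paths_at P (Suc j)) = fls_X * gf excursions * gf (paths_at P j)"
    unfolding paths_at_Suc[OF assms] by (rule gf_up_join) (simp_all add: excursions_def paths_at_def)
  with Suc show ?case by (simp add: algebra_simps)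
qed simp

lemma gf_F_paths: "gf (F_paths j) = (fls_X * gf excursions) ^ j"
proof -
  have "gf (F_paths j) = (fls_X * gf excursions) ^ j * gf (F_paths 0)"
    unfolding F_paths_eq by (rule gf_paths_at_power) (auto simp: descents_append_up)
  then show ?thesis by (simp add: F_paths_0 gf_Nil)
qed

lemma gf_G_paths: "gf (G_paths j) = gf (F_paths 1) ^ j * gf (G_paths 0)"
  unfolding G_paths_eq gf_F_paths power_one_right
  by (rule gf_paths_at_power) (rule ends_with_descent_append_up)

lemma gf_H_paths: "gf (H_paths j) = gf (F_paths 1) ^ j * gf (H_paths 0)"
  unfolding H_paths_eq gf_F_paths power_one_right
  by (rule gf_paths_at_power) (rule ends_with_descent_append_up)

lemma gf_excursions: "gf excursions = 1 + gf (G_paths 0)"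
proof -
  have "[] \<notin> G_paths 0" by (simp add: G_paths_def)
  then show ?thesis unfolding excursions_eq using gf_Un_disjoint[of "{[]}" "G_paths 0"] by (simp add: gf_Nil)
qed

lemma gf_G_paths_0: "gf (G_paths 0) = fls_X * gf (F_paths 1) * (1 + gf (H_paths 0))"
proof -
  have "F_paths 1 \<inter> H_paths 1 = {}" unfolding F_paths_def H_paths_def by auto
  then have "gf (G_paths 0) = fls_X * (gf (F_paths 1) + gf (H_paths 1))"
    unfolding G_paths_snoc_down by (simp add: gf_image_snoc gf_Un_disjoint)
  then show ?thesis using gf_H_paths[of 1] by (simp add: algebra_simps)
qed

lemma gf_H_paths_0: "gf (H_paths 0) = fls_X * gf (F_paths 1) * gf (G_paths 0)"
  using gf_G_paths[of 1] unfolding H_paths_snoc_down gf_image_snoc by (simp add: algebra_simps)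

section \<open>Identification of \<open>v\<^sub>1\<close>\<close>

definition reciprocal_cubic :: "'a \<Rightarrow> 'a \<Rightarrow> 'a::comm_ring_1" where
  "reciprocal_cubic z w = z + (z^2 - 1) * w - z^3 * w^2 + z^2 * w^3"

lemma reciprocal_cubic_gf_F_paths_1: "reciprocal_cubic fls_X (gf (F_paths 1)) = 0"
proof -
  define z W g h where "z = (fls_X :: real fls)" "W = gf (F_paths 1)" "g = gf (G_paths 0)" "h = gf (H_paths 0)"
  have "W = z * (1 + g)" unfolding z_W_g_h_def using gf_F_paths[of 1] by (simp add: gf_excursions)
  moreover have "g = z * W * (1 + z * W * g)"
    unfolding z_W_g_h_def using gf_G_paths_0 gf_H_paths_0 by simp
  moreover have "reciprocal_cubic z W = (z^2 * W^2 - 1) * (W - z * (1 + g)) - z * (g - z * W * (1 + z * W * g))"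
    unfolding reciprocal_cubic_def by algebra
  ultimately show ?thesis unfolding z_W_g_h_def by simp
qed

lemma reciprocal_cubic_fps_unique:
  fixes P Q :: "'a::idom fps"
  assumes "reciprocal_cubic fps_X P = 0" "reciprocal_cubic fps_X Q = 0"
  shows "P = Q"
proof -
  define B where "B = (fps_X^2 - 1) - fps_X^3 * (P + Q) + fps_X^2 * (P^2 + P * Q + Q^2)"
  have "reciprocal_cubic fps_X P - reciprocal_cubic fps_X Q = (P - Q) * B"
    unfolding reciprocal_cubic_def B_def by (simp add: algebra_simps power2_eq_square power3_eq_cube)
  moreover have "B $ 0 = -1" unfolding B_def by (simp add: fps_X_power_mult_nth)
  ultimately show ?thesis using assms by (metis eq_iff_diff_eq_0 mult_eq_0_iff neg_equal_0_iff_equal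
      one_neq_zero fps_zero_nth)
qed

lemma fps_to_fls_reciprocal_cubic:
  "fps_to_fls (reciprocal_cubic fps_X P) = reciprocal_cubic fls_X (fps_to_fls P)"
  by (simp add: reciprocal_cubic_def fls_times_fps_to_fls fps_to_fls_power)

lemma cubic_eq_reciprocal_cubic:
  fixes z u :: "'a::field"
  assumes "u \<noteq> 0"
  shows "z * u^3 + (z^2 - 1) * u^2 - z^3 * u + z^2 = u^3 * reciprocal_cubic z (inverse u)"
  using assms unfolding reciprocal_cubic_def by (simp add: field_simps) algebra

text \<open>The root \<open>v\<^sub>1\<close> is the reciprocal of the unique power series \<open>W = z + O(z\<^sup>2)\<close> solving the
  reciprocal cubic; the leading-coefficient conditions in the definition of \<open>v1\<close> select it.\<close>

lemma v1_eq_inverse: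
  fixes W :: "real fps"
  assumes W0: "W $ 0 = 0" and W1: "W $ 1 = 1" and root: "reciprocal_cubic fps_X W = 0"
  shows "v1 = inverse (fps_to_fls W)"
proof (unfold v1_def, rule the_equality)
  have "subdegree W = 1" using W0 W1 by (intro subdegreeI) (auto simp: less_Suc_eq)
  then have sub: "fls_subdegree (fps_to_fls W) = 1" by (simp add: fls_subdegree_fls_to_fps)
  have nz: "fps_to_fls W \<noteq> 0" using W1 by auto
  let ?u = "inverse (fps_to_fls W)"
  show "fls_X * ?u^3 + (fls_X^2 - 1) * ?u^2 - fls_X^3 * ?u + fls_X^2 = 0 \<and> ?u \<noteq> 0
        \<and> fls_subdegree ?u = -1 \<and> fls_nth ?u (-1) = 1"
    using cubic_eq_reciprocal_cubic[of ?u fls_X] root fps_to_fls_reciprocal_cubic[of W] nz sub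
      fls_inverse_base[OF nz] W1 by simp
next
  fix u :: "real fls"
  assume u: "fls_X * u^3 + (fls_X^2 - 1) * u^2 - fls_X^3 * u + fls_X^2 = 0 \<and> u \<noteq> 0
        \<and> fls_subdegree u = -1 \<and> fls_nth u (-1) = 1"
  define P where "P = fls_regpart (inverse u)"
  have "fls_subdegree (inverse u) = 1" using u by simp
  then have inv: "inverse u = fps_to_fls P" unfolding P_def by simp
  have "reciprocal_cubic fls_X (inverse u) = 0"
    using u cubic_eq_reciprocal_cubic[of u fls_X] by simp
  then have "reciprocal_cubic fps_X P = 0"
    unfolding inv fps_to_fls_reciprocal_cubic[symmetric] by simp
  then have "P = W" using root by (rule reciprocal_cubic_fps_unique)
  then show "u = inverse (fps_to_fls W)" using inv by (metis inverse_inverse_eq)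
qed

lemma length_counts_F_paths_1:
  "length_counts (F_paths 1) $ 0 = 0" "length_counts (F_paths 1) $ 1 = 1"
proof -
  have "{xs \<in> F_paths 1. length xs = 0} = {}" by (auto simp: F_paths_def)
  moreover have "{xs \<in> F_paths 1. length xs = 1} = {[True]}"
    by (auto simp: F_paths_def length_Suc_conv partial_dyck_def le_Suc_eq descents_def)
  ultimately show "length_counts (F_paths 1) $ 0 = 0" "length_counts (F_paths 1) $ 1 = 1"
    by (simp_all add: length_counts_def)
qed

lemma v1_eq_inverse_gf_F_paths_1: "v1 = inverse (gf (F_paths 1))"
proof -
  have "reciprocal_cubic fps_X (length_counts (F_paths 1)) = 0"
    using reciprocal_cubic_gf_F_paths_1
    by (simp add: gf_eq_length_counts fps_to_fls_reciprocal_cubic[symmetric])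
  with length_counts_F_paths_1 have "v1 = inverse (fps_to_fls (length_counts (F_paths 1)))"
    by (rule v1_eq_inverse)
  then show ?thesis by (simp add: gf_eq_length_counts)
qed

lemma v1_nonzero: "v1 \<noteq> 0"
proof -
  have "length_counts (F_paths 1) \<noteq> 0" using length_counts_F_paths_1(2) by auto
  then show ?thesis by (simp add: v1_eq_inverse_gf_F_paths_1 gf_eq_length_counts)
qed

lemma gf_F_paths_closed: "gf (F_paths j) = inverse (v1 ^ j)"
proof -
  have "gf (F_paths j) = gf (F_paths 1) ^ j" unfolding gf_F_paths by simp
  then show ?thesis by (simp add: v1_eq_inverse_gf_F_paths_1 power_inverse)
qed

lemma gf_G_paths_closed: "gf (G_paths j) = fls_X * (1 + gf (H_paths 0)) / v1 ^ (j + 1)"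
  using gf_G_paths[of j] gf_G_paths_0
  by (simp add: v1_eq_inverse_gf_F_paths_1 power_inverse divide_inverse algebra_simps)

lemma gf_H_paths_closed: "gf (H_paths j) = fls_X * gf (G_paths 0) / v1 ^ (j + 1)"
  using gf_H_paths[of j] gf_H_paths_0
  by (simp add: v1_eq_inverse_gf_F_paths_1 power_inverse divide_inverse algebra_simps)

lemma coupled_linear_solution:
  fixes g h v z :: "'a::field"
  assumes "g = z * (1 + h) / v" "h = z * g / v" "v \<noteq> 0" "z \<noteq> 0"
  shows "g = z * v / (v^2 - z^2)" "h = z^2 / (v^2 - z^2)"
proof -
  have gv: "g * v = z * (1 + h)" using assms(1,3) by simp
  have hv: "h * v = z * g" using assms(2,3) by simp
  have "g * (v^2 - z^2) = (g * v) * v - z * z * g" by (simp add: algebra_simps power2_eq_square)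
  also have "\<dots> = z * v + z * (h * v) - z * z * g" unfolding gv by (simp add: algebra_simps)
  also have "\<dots> = z * v" unfolding hv by simp
  finally have "g * (v^2 - z^2) = z * v" .
  moreover have "z * v \<noteq> 0" using assms by simp
  ultimately have nz: "v^2 - z^2 \<noteq> 0" by auto
  with \<open>g * (v^2 - z^2) = z * v\<close> show g: "g = z * v / (v^2 - z^2)" by (simp add: eq_divide_eq)
  show "h = z^2 / (v^2 - z^2)" unfolding assms(2) g using assms(3) by (simp add: power2_eq_square)
qed

lemma fps_geometric_quotient:
  fixes c v :: "'a::field"
  assumes "v \<noteq> 0"
  shows "Abs_fps (\<lambda>j. c / v ^ (j + 1)) = fps_const (- c) / (fps_X - fps_const v)"
proof -
  let ?A = "Abs_fps (\<lambda>j. c / v ^ (j + 1))" and ?D = "fps_X - fps_const v :: 'a fps"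
  have "(?A * ?D) $ n = fps_const (- c) $ n" for n
    using assms by (cases n) (simp_all add: algebra_simps)
  then have "?A * ?D = fps_const (- c)" by (rule fps_ext)
  moreover have "?D $ 0 \<noteq> 0" using assms by simp
  then have "?D \<noteq> 0" by auto
  ultimately show ?thesis by (metis nonzero_mult_div_cancel_right)
qed

lemma fps_inverse_powers:
  fixes v :: "'a::field"
  assumes "v \<noteq> 0"
  shows "Abs_fps (\<lambda>j. inverse (v ^ j)) = 1 - fps_X / (fps_X - fps_const v)"
proof -
  let ?D = "fps_X - fps_const v :: 'a fps"
  have D0: "?D $ 0 \<noteq> 0" using assms by simp
  have "Abs_fps (\<lambda>j. inverse (v ^ j)) = Abs_fps (\<lambda>j. v / v ^ (j + 1))"
    using assms by (simp add: field_simps)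
  also have "\<dots> = fps_const (- v) / ?D" by (rule fps_geometric_quotient[OF assms])
  also have "\<dots> = (?D - fps_X) * inverse ?D" by (simp add: fps_divide_unit[OF D0])
  also have "\<dots> = ?D * inverse ?D - fps_X * inverse ?D" by (rule left_diff_distrib)
  also have "\<dots> = 1 - fps_X / ?D" by (simp only: inverse_mult_eq_1'[OF D0] fps_divide_unit[OF D0])
  finally show ?thesis .
qed

theorem mainTheorem3:
  fixes j :: nat
  defines "z \<equiv> (fls_X :: real fls)"
  defines "f \<equiv> (\<lambda>i. gf (F_paths i))"
      and "g \<equiv> (\<lambda>i. gf (G_paths i))"
      and "h \<equiv> (\<lambda>i. gf (H_paths i))"
  shows "f 0 = 1
    \<and> (j \<ge> 1 \<longrightarrow> f j = inverse (v1 ^ j))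
    \<and> g j = z * (1 + h 0) / v1 ^ (j + 1)
    \<and> h j = z * g 0 / v1 ^ (j + 1)
    \<and> g 0 = z * v1 / (v1^2 - z^2)
    \<and> h 0 = z^2 / (v1^2 - z^2)
    \<and> Abs_fps f = 1 - fps_X / (fps_X - fps_const v1)
    \<and> Abs_fps g = fps_const (- z * (1 + h 0)) / (fps_X - fps_const v1)
    \<and> Abs_fps h = fps_const (- z * g 0) / (fps_X - fps_const v1)"
proof -
  have F: "f i = inverse (v1 ^ i)" for i unfolding f_def by (rule gf_F_paths_closed)
  have G: "g i = z * (1 + h 0) / v1 ^ (i + 1)" for i unfolding g_def h_def z_def by (rule gf_G_paths_closed)
  have H: "h i = z * g 0 / v1 ^ (i + 1)" for i unfolding g_def h_def z_def by (rule gf_H_paths_closed)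
  have "z \<noteq> 0" unfolding z_def by simp
  with G[of 0, simplified] H[of 0, simplified] v1_nonzero
  have g0h0: "g 0 = z * v1 / (v1^2 - z^2)" "h 0 = z^2 / (v1^2 - z^2)"
    by (rule coupled_linear_solution)+
  have "Abs_fps f = 1 - fps_X / (fps_X - fps_const v1)"
    unfolding F[abs_def] by (rule fps_inverse_powers[OF v1_nonzero])
  moreover have "Abs_fps g = fps_const (- z * (1 + h 0)) / (fps_X - fps_const v1)"
    unfolding G[abs_def] using fps_geometric_quotient[OF v1_nonzero] by simp
  moreover have "Abs_fps h = fps_const (- z * g 0) / (fps_X - fps_const v1)"
    unfolding H[abs_def] using fps_geometric_quotient[OF v1_nonzero] by simp
  moreover have "f 0 = 1" using F[of 0] by simp
  ultimately show ?thesis using F[of j] G[of j] H[of j] g0h0 by blast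
qed

end
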